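(* Let $V$ be a set of $N\geq3$ truth values with a partial order $\leq$ having $0$ as least and $1$ as greatest element, let $\models_{\leq}$ be the associated order-theoretic truth-relation, and assume the semantics is at least atomic expressive. Then $\models_{\leq}$ admits no G-negation and no G-conditional. Moreover, it admits a G-conjunction and a G-disjunction if and only if it is total, i.e. any two truth values other than $0,1$ are comparable under $\leq$.
   Context: $\gamma\models_{\leq}\delta$ iff ($\exists x\in\gamma,\exists y\in\delta: x\leq y$) or $0\in\gamma$ or $1\in\delta$. Semantics: valuations mapping atoms to $V$, connectives interpreted by fixed truth functions, extended compositionally, every assignment of values to finitely many distinct atoms realized. Atomic expressive: for every $\gamma\subseteq V$ some set of formulas $\Gamma$ and valuation $v$ have $v(\Gamma)=\gamma$. $\Gamma\vdash\Delta$ iff $v(\Gamma)\models_{\leq}v(\Delta)$ for all $v$; $\Gamma,A=\Gamma\cup\{A\}$. Admitting a G-connective means some truth function makes a connective satisfy, for all $\Gamma,\Delta,A,B$: G-conjunction: $\Gamma,A\wedge B\vdash\Delta$ iff $\Gamma,A,B\vdash\Delta$; $\Gamma\vdash A\wedge B,\Delta$ iff ($\Gamma\vdash A,\Delta$ and $\Gamma\vdash B,\Delta$). G-disjunction: $\Gamma\vdash A\vee B,\Delta$ iff $\Gamma\vdash A,B,\Delta$; $\Gamma,A\vee B\vdash\Delta$ iff ($\Gamma,A\vdash\Delta$ and $\Gamma,B\vdash\Delta$). G-negation: $\Gamma,\neg A\vdash\Delta$ iff $\Gamma\vdash A,\Delta$; $\Gamma\vdash\neg A,\Delta$ iff $\Gamma,A\vdash\Delta$.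 G-conditional: $\Gamma\vdash A\to B,\Delta$ iff $\Gamma,A\vdash B,\Delta$; $\Gamma,A\to B\vdash\Delta$ iff ($\Gamma\vdash A,\Delta$ and $\Gamma,B\vdash\Delta$). *)

theory Defs
  imports Main
begin

(* Order-theoretic truth relation |=_<= on sets of truth values;
   le is the partial order, bt the least element (0), tp the greatest (1). *)
definition tr :: "('v \<Rightarrow> 'v \<Rightarrow> bool) \<Rightarrow> 'v \<Rightarrow> 'v \<Rightarrow> 'v set \<Rightarrow> 'v set \<Rightarrow> bool" where
  "tr le bt tp g d \<longleftrightarrow> (\<exists>x\<in>g. \<exists>y\<in>d. le x y) \<or> bt \<in> g \<or> tp \<in> d"

definition partial_order_on_carrier :: "'v set \<Rightarrow> ('v \<Rightarrow> 'v \<Rightarrow> bool) \<Rightarrow> bool" where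
  "partial_order_on_carrier V le \<longleftrightarrow>
     (\<forall>x\<in>V. le x x) \<and>
     (\<forall>x\<in>V. \<forall>y\<in>V. le x y \<and> le y x \<longrightarrow> x = y) \<and>
     (\<forall>x\<in>V. \<forall>y\<in>V. \<forall>z\<in>V. le x y \<and> le y z \<longrightarrow> le x z)"

definition total_order_rel :: "'v set \<Rightarrow> ('v \<Rightarrow> 'v \<Rightarrow> bool) \<Rightarrow> 'v \<Rightarrow> 'v \<Rightarrow> bool" where
  "total_order_rel V le bt tp \<longleftrightarrow>
     (\<forall>x\<in>V - {bt, tp}. \<forall>y\<in>V - {bt, tp}. le x y \<or> le y x)"

datatype bfm = BAt nat | BOp bfm bfm
datatype ufm = UAt nat | UOp ufm

primrec beval :: "(nat \<Rightarrow> 'v) \<Rightarrow> ('v \<Rightarrow> 'v \<Rightarrow> 'v) \<Rightarrow> bfm \<Rightarrow> 'v" where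
  "beval v f (BAt n) = v n"
| "beval v f (BOp A B) = f (beval v f A) (beval v f B)"

primrec ueval :: "(nat \<Rightarrow> 'v) \<Rightarrow> ('v \<Rightarrow> 'v) \<Rightarrow> ufm \<Rightarrow> 'v" where
  "ueval v f (UAt n) = v n"
| "ueval v f (UOp A) = f (ueval v f A)"

definition bcons :: "'v set \<Rightarrow> ('v \<Rightarrow> 'v \<Rightarrow> bool) \<Rightarrow> 'v \<Rightarrow> 'v \<Rightarrow> ('v \<Rightarrow> 'v \<Rightarrow> 'v)
                     \<Rightarrow> bfm set \<Rightarrow> bfm set \<Rightarrow> bool" where
  "bcons V le bt tp f G D \<longleftrightarrow>
     (\<forall>v. (\<forall>n. v n \<in> V) \<longrightarrow> tr le bt tp (beval v f ` G) (beval v f ` D))"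

definition ucons :: "'v set \<Rightarrow> ('v \<Rightarrow> 'v \<Rightarrow> bool) \<Rightarrow> 'v \<Rightarrow> 'v \<Rightarrow> ('v \<Rightarrow> 'v)
                     \<Rightarrow> ufm set \<Rightarrow> ufm set \<Rightarrow> bool" where
  "ucons V le bt tp f G D \<longleftrightarrow>
     (\<forall>v. (\<forall>n. v n \<in> V) \<longrightarrow> tr le bt tp (ueval v f ` G) (ueval v f ` D))"

definition admits_G_conj :: "'v set \<Rightarrow> ('v \<Rightarrow> 'v \<Rightarrow> bool) \<Rightarrow> 'v \<Rightarrow> 'v \<Rightarrow> bool" where
  "admits_G_conj V le bt tp \<longleftrightarrow> (\<exists>f. (\<forall>x\<in>V. \<forall>y\<in>V. f x y \<in> V) \<and>
     (\<forall>G D A B.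
        (bcons V le bt tp f (insert (BOp A B) G) D \<longleftrightarrow> bcons V le bt tp f (insert A (insert B G)) D) \<and>
        (bcons V le bt tp f G (insert (BOp A B) D) \<longleftrightarrow>
           bcons V le bt tp f G (insert A D) \<and> bcons V le bt tp f G (insert B D))))"

definition admits_G_disj :: "'v set \<Rightarrow> ('v \<Rightarrow> 'v \<Rightarrow> bool) \<Rightarrow> 'v \<Rightarrow> 'v \<Rightarrow> bool" where
  "admits_G_disj V le bt tp \<longleftrightarrow> (\<exists>f. (\<forall>x\<in>V. \<forall>y\<in>V. f x y \<in> V) \<and>
     (\<forall>G D A B.
        (bcons V le bt tp f G (insert (BOp A B) D) \<longleftrightarrow> bcons V le bt tp f G (insert A (insert B D))) \<and>
        (bcons V le bt tp f (insert (BOp A B) G) D \<longleftrightarrow>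
           bcons V le bt tp f (insert A G) D \<and> bcons V le bt tp f (insert B G) D)))"

definition admits_G_neg :: "'v set \<Rightarrow> ('v \<Rightarrow> 'v \<Rightarrow> bool) \<Rightarrow> 'v \<Rightarrow> 'v \<Rightarrow> bool" where
  "admits_G_neg V le bt tp \<longleftrightarrow> (\<exists>f. (\<forall>x\<in>V. f x \<in> V) \<and>
     (\<forall>G D A.
        (ucons V le bt tp f (insert (UOp A) G) D \<longleftrightarrow> ucons V le bt tp f G (insert A D)) \<and>
        (ucons V le bt tp f G (insert (UOp A) D) \<longleftrightarrow> ucons V le bt tp f (insert A G) D)))"

definition admits_G_cond :: "'v set \<Rightarrow> ('v \<Rightarrow> 'v \<Rightarrow> bool) \<Rightarrow> 'v \<Rightarrow> 'v \<Rightarrow> bool" where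
  "admits_G_cond V le bt tp \<longleftrightarrow> (\<exists>f. (\<forall>x\<in>V. \<forall>y\<in>V. f x y \<in> V) \<and>
     (\<forall>G D A B.
        (bcons V le bt tp f G (insert (BOp A B) D) \<longleftrightarrow> bcons V le bt tp f (insert A G) (insert B D)) \<and>
        (bcons V le bt tp f (insert (BOp A B) G) D \<longleftrightarrow>
           bcons V le bt tp f G (insert A D) \<and> bcons V le bt tp f (insert B G) D)))"

(* Atomic expressivity: every set of truth values is the image of some set of
   formulas (here already of atoms) under some valuation. *)
definition atomic_expressive :: "'v set \<Rightarrow> bool" where
  "atomic_expressive V \<longleftrightarrow>
     (\<forall>g. g \<subseteq> V \<longrightarrow> (\<exists>G :: bfm set. \<exists>v. (\<forall>n. v n \<in> V) \<and> beval v (\<lambda>x y. x) ` G = g))"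

end

theory Submission
  imports Defs
begin

(* On the left of the truth relation a value may be replaced by any smaller one, on the right by any
   larger one. So a G-conjunction must send a, b to a common lower bound that still lies above a or
   above b, which makes a and b comparable; conversely, in a total order min and max work as
   conjunction and disjunction. For negation and the conditional, the identity sequent A |- A and the
   rules, evaluated at a value m other than 0 and 1, give contradictory constraints: the negation of m
   would have to be both 0 and 1, and m -> 0 would have to be 1 and yet lie below 0. *)

lemma card_ge_3_ex_other:
  assumes "3 \<le> card V"
  shows "\<exists>m\<in>V. m \<noteq> a \<and> m \<noteq> b"
proof (rule ccontr)
  assume "\<not> ?thesis"
  then have "V \<subseteq> {a, b}" by blast
  then have "card V \<le> card {a, b}"
    using assms by (intro card_mono) auto
  also have "\<dots> \<le> 2" by (simp add: card_insert_le_m1)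
  finally show False using assms by simp
qed

lemma tr_mono: "tr le bt tp g d \<Longrightarrow> g \<subseteq> g' \<Longrightarrow> d \<subseteq> d' \<Longrightarrow> tr le bt tp g' d'"
  unfolding tr_def by blast

lemma beval_in_V:
  "(\<forall>n. v n \<in> V) \<Longrightarrow> (\<forall>x\<in>V. \<forall>y\<in>V. f x y \<in> V) \<Longrightarrow> beval v f A \<in> V"
  by (induction A) auto

lemma ueval_in_V: "(\<forall>n. v n \<in> V) \<Longrightarrow> (\<forall>x\<in>V. f x \<in> V) \<Longrightarrow> ueval v f A \<in> V"
  by (induction A) auto

lemma bconsD:
  "bcons V le bt tp f G D \<Longrightarrow> \<forall>n. v n \<in> V \<Longrightarrow> tr le bt tp (beval v f ` G) (beval v f ` D)"
  unfolding bcons_def by blast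

lemma uconsD:
  "ucons V le bt tp f G D \<Longrightarrow> \<forall>n. v n \<in> V \<Longrightarrow> tr le bt tp (ueval v f ` G) (ueval v f ` D)"
  unfolding ucons_def by blast

lemma admits_G_conjI:
  assumes closed: "\<forall>x\<in>V. \<forall>y\<in>V. f x y \<in> V"
    and left: "\<And>a b g d. a \<in> V \<Longrightarrow> b \<in> V \<Longrightarrow> g \<subseteq> V \<Longrightarrow> d \<subseteq> V \<Longrightarrow>
      tr le bt tp (insert (f a b) g) d \<longleftrightarrow> tr le bt tp (insert a (insert b g)) d"
    and right: "\<And>a b g d. a \<in> V \<Longrightarrow> b \<in> V \<Longrightarrow> g \<subseteq> V \<Longrightarrow> d \<subseteq> V \<Longrightarrow>
      tr le bt tp g (insert (f a b) d) \<longleftrightarrow> tr le bt tp g (insert a d) \<and> tr le bt tp g (insert b d)"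
  shows "admits_G_conj V le bt tp"
  unfolding admits_G_conj_def bcons_def
  using closed left right beval_in_V[OF _ closed] by (intro exI[of _ f]) (auto simp: image_subset_iff)

lemma admits_G_disjI:
  assumes closed: "\<forall>x\<in>V. \<forall>y\<in>V. f x y \<in> V"
    and right: "\<And>a b g d. a \<in> V \<Longrightarrow> b \<in> V \<Longrightarrow> g \<subseteq> V \<Longrightarrow> d \<subseteq> V \<Longrightarrow>
      tr le bt tp g (insert (f a b) d) \<longleftrightarrow> tr le bt tp g (insert a (insert b d))"
    and left: "\<And>a b g d. a \<in> V \<Longrightarrow> b \<in> V \<Longrightarrow> g \<subseteq> V \<Longrightarrow> d \<subseteq> V \<Longrightarrow>
      tr le bt tp (insert (f a b) g) d \<longleftrightarrow> tr le bt tp (insert a g) d \<and> tr le bt tp (insert b g) d"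
  shows "admits_G_disj V le bt tp"
  unfolding admits_G_disj_def bcons_def
  using closed left right beval_in_V[OF _ closed] by (intro exI[of _ f]) (auto simp: image_subset_iff)

locale bounded_poset =
  fixes V :: "'v set" and le :: "'v \<Rightarrow> 'v \<Rightarrow> bool" and bt tp :: 'v
  assumes partial_order: "partial_order_on_carrier V le"
    and bt_in_V: "bt \<in> V" and tp_in_V: "tp \<in> V"
    and bounds: "\<forall>x\<in>V. le bt x \<and> le x tp"
begin

lemma po_refl: "x \<in> V \<Longrightarrow> le x x"
  using partial_order unfolding partial_order_on_carrier_def by blast

lemma po_antisym: "x \<in> V \<Longrightarrow> y \<in> V \<Longrightarrow> le x y \<Longrightarrow> le y x \<Longrightarrow> x = y"
  using partial_order unfolding partial_order_on_carrier_def by blast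

lemma po_trans: "x \<in> V \<Longrightarrow> y \<in> V \<Longrightarrow> z \<in> V \<Longrightarrow> le x y \<Longrightarrow> le y z \<Longrightarrow> le x z"
  using partial_order unfolding partial_order_on_carrier_def by blast

lemma le_bt_imp_eq: "x \<in> V \<Longrightarrow> le x bt \<Longrightarrow> x = bt"
  using po_antisym bounds bt_in_V by blast

lemma tp_le_imp_eq: "x \<in> V \<Longrightarrow> le tp x \<Longrightarrow> x = tp"
  using po_antisym bounds tp_in_V by blast

lemma bt_ne_tp: "m \<in> V \<Longrightarrow> m \<noteq> bt \<Longrightarrow> bt \<noteq> tp"
  using le_bt_imp_eq bounds by blast

lemma linear_if_total_order_rel:
  "total_order_rel V le bt tp \<Longrightarrow> x \<in> V \<Longrightarrow> y \<in> V \<Longrightarrow> le x y \<or> le y x"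
  using bounds unfolding total_order_rel_def by blast

lemma tr_insert_left_antimono:
  assumes "le a b" "a \<in> V" "b \<in> V" "d \<subseteq> V" "tr le bt tp (insert b g) d"
  shows "tr le bt tp (insert a g) d"
  using assms po_trans le_bt_imp_eq unfolding tr_def by blast

lemma tr_insert_right_mono:
  assumes "le a b" "a \<in> V" "b \<in> V" "g \<subseteq> V" "tr le bt tp g (insert a d)"
  shows "tr le bt tp g (insert b d)"
  using assms po_trans tp_le_imp_eq unfolding tr_def by blast

lemma tr_insert_least_left:
  assumes "c \<in> {a, b}" "le c a" "le c b" "a \<in> V" "b \<in> V" "d \<subseteq> V"
  shows "tr le bt tp (insert c g) d \<longleftrightarrow> tr le bt tp (insert a (insert b g)) d"
proof
  assume "tr le bt tp (insert c g) d"
  moreover have "insert c g \<subseteq> insert a (insert b g)" using assms(1) by blast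
  ultimately show "tr le bt tp (insert a (insert b g)) d" by (rule tr_mono) simp
next
  have "c \<in> V" using assms by blast
  assume "tr le bt tp (insert a (insert b g)) d"
  then have "tr le bt tp (insert c (insert b g)) d"
    using assms \<open>c \<in> V\<close> by (intro tr_insert_left_antimono[of c a])
  then have "tr le bt tp (insert b (insert c g)) d" by (simp add: insert_commute)
  then have "tr le bt tp (insert c (insert c g)) d"
    using assms \<open>c \<in> V\<close> by (intro tr_insert_left_antimono[of c b])
  then show "tr le bt tp (insert c g) d" by simp
qed

lemma tr_insert_least_right:
  assumes "c \<in> {a, b}" "le c a" "le c b" "a \<in> V" "b \<in> V" "g \<subseteq> V"
  shows "tr le bt tp g (insert c d) \<longleftrightarrow> tr le bt tp g (insert a d) \<and> tr le bt tp g (insert b d)"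
  using assms tr_insert_right_mono[of c a] tr_insert_right_mono[of c b] by blast

lemma tr_insert_greatest_right:
  assumes "c \<in> {a, b}" "le a c" "le b c" "a \<in> V" "b \<in> V" "g \<subseteq> V"
  shows "tr le bt tp g (insert c d) \<longleftrightarrow> tr le bt tp g (insert a (insert b d))"
proof
  assume "tr le bt tp g (insert c d)"
  moreover have "insert c d \<subseteq> insert a (insert b d)" using assms(1) by blast
  ultimately show "tr le bt tp g (insert a (insert b d))" by (rule tr_mono[OF _ order_refl])
next
  have "c \<in> V" using assms by blast
  assume "tr le bt tp g (insert a (insert b d))"
  then have "tr le bt tp g (insert c (insert b d))"
    using assms \<open>c \<in> V\<close> by (intro tr_insert_right_mono[of a c])
  then have "tr le bt tp g (insert b (insert c d))" by (simp add: insert_commute)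
  then have "tr le bt tp g (insert c (insert c d))"
    using assms \<open>c \<in> V\<close> by (intro tr_insert_right_mono[of b c])
  then show "tr le bt tp g (insert c d)" by simp
qed

lemma tr_insert_greatest_left:
  assumes "c \<in> {a, b}" "le a c" "le b c" "a \<in> V" "b \<in> V" "d \<subseteq> V"
  shows "tr le bt tp (insert c g) d \<longleftrightarrow> tr le bt tp (insert a g) d \<and> tr le bt tp (insert b g) d"
  using assms tr_insert_left_antimono[of a c] tr_insert_left_antimono[of b c] by blast

lemma admits_G_conj_if_total:
  assumes "total_order_rel V le bt tp"
  shows "admits_G_conj V le bt tp"
proof (rule admits_G_conjI)
  let ?min = "\<lambda>x y. if le x y then x else y"
  have min: "?min a b \<in> {a, b}" "le (?min a b) a" "le (?min a b) b" if "a \<in> V" "b \<in> V" for a b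
    using that po_refl linear_if_total_order_rel[OF assms] by auto
  show "\<forall>x\<in>V. \<forall>y\<in>V. ?min x y \<in> V" by simp
  show "tr le bt tp (insert (?min a b) g) d \<longleftrightarrow> tr le bt tp (insert a (insert b g)) d"
    if "a \<in> V" "b \<in> V" "g \<subseteq> V" "d \<subseteq> V" for a b g d
    using that min[OF that(1,2)] by (intro tr_insert_least_left)
  show "tr le bt tp g (insert (?min a b) d) \<longleftrightarrow>
      tr le bt tp g (insert a d) \<and> tr le bt tp g (insert b d)"
    if "a \<in> V" "b \<in> V" "g \<subseteq> V" "d \<subseteq> V" for a b g d
    using that min[OF that(1,2)] by (intro tr_insert_least_right)
qed

lemma admits_G_disj_if_total:
  assumes "total_order_rel V le bt tp"
  shows "admits_G_disj V le bt tp"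
proof (rule admits_G_disjI)
  let ?max = "\<lambda>x y. if le x y then y else x"
  have max: "?max a b \<in> {a, b}" "le a (?max a b)" "le b (?max a b)" if "a \<in> V" "b \<in> V" for a b
    using that po_refl linear_if_total_order_rel[OF assms] by auto
  show "\<forall>x\<in>V. \<forall>y\<in>V. ?max x y \<in> V" by simp
  show "tr le bt tp g (insert (?max a b) d) \<longleftrightarrow> tr le bt tp g (insert a (insert b d))"
    if "a \<in> V" "b \<in> V" "g \<subseteq> V" "d \<subseteq> V" for a b g d
    using that max[OF that(1,2)] by (intro tr_insert_greatest_right)
  show "tr le bt tp (insert (?max a b) g) d \<longleftrightarrow>
      tr le bt tp (insert a g) d \<and> tr le bt tp (insert b g) d"
    if "a \<in> V" "b \<in> V" "g \<subseteq> V" "d \<subseteq> V" for a b g d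
    using that max[OF that(1,2)] by (intro tr_insert_greatest_left)
qed

lemma bcons_refl: "(\<forall>x\<in>V. \<forall>y\<in>V. f x y \<in> V) \<Longrightarrow> A \<in> G \<Longrightarrow> A \<in> D \<Longrightarrow> bcons V le bt tp f G D"
  unfolding bcons_def tr_def using beval_in_V po_refl by blast

lemma ucons_refl: "(\<forall>x\<in>V. f x \<in> V) \<Longrightarrow> A \<in> G \<Longrightarrow> A \<in> D \<Longrightarrow> ucons V le bt tp f G D"
  unfolding ucons_def tr_def using ueval_in_V po_refl by blast

lemma total_order_rel_if_admits_G_conj:
  assumes "admits_G_conj V le bt tp"
  shows "total_order_rel V le bt tp"
  unfolding total_order_rel_def
proof (intro ballI)
  fix a b assume a: "a \<in> V - {bt, tp}" and b: "b \<in> V - {bt, tp}"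
  obtain f where closed: "\<forall>x\<in>V. \<forall>y\<in>V. f x y \<in> V" and rules: "\<forall>G D A B.
      (bcons V le bt tp f (insert (BOp A B) G) D \<longleftrightarrow> bcons V le bt tp f (insert A (insert B G)) D) \<and>
      (bcons V le bt tp f G (insert (BOp A B) D) \<longleftrightarrow>
         bcons V le bt tp f G (insert A D) \<and> bcons V le bt tp f G (insert B D))"
    using assms unfolding admits_G_conj_def by blast
  let ?A = "BAt 0" and ?B = "BAt 1"
  have AB_A: "bcons V le bt tp f {?A, ?B} {?A}" and AB_B: "bcons V le bt tp f {?A, ?B} {?B}"
    using closed by (auto intro: bcons_refl)
  have conj_A: "bcons V le bt tp f {BOp ?A ?B} {?A}" using rules AB_A by blast
  have conj_B: "bcons V le bt tp f {BOp ?A ?B} {?B}" using rules AB_B by blast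
  have AB_conj: "bcons V le bt tp f {?A, ?B} {BOp ?A ?B}" using rules AB_A AB_B by blast
  define v where "v n = (if n = 0 then a else b)" for n :: nat
  have v: "\<forall>n. v n \<in> V" using a b by (simp add: v_def)
  have c: "f a b \<in> V" using closed a b by blast
  have "tr le bt tp {f a b} {a}" using bconsD[OF conj_A v] by (simp add: v_def)
  then have ca: "le (f a b) a" using a bounds unfolding tr_def by auto
  have "tr le bt tp {f a b} {b}" using bconsD[OF conj_B v] by (simp add: v_def)
  then have cb: "le (f a b) b" using b bounds unfolding tr_def by auto
  have "tr le bt tp {a, b} {f a b}" using bconsD[OF AB_conj v] by (simp add: v_def)
  then have "le a (f a b) \<or> le b (f a b)" using a b c ca tp_le_imp_eq unfolding tr_def by auto
  then show "le a b \<or> le b a" using po_trans[OF _ c] a b ca cb by blast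
qed

lemma not_admits_G_neg:
  assumes "m \<in> V" "m \<noteq> bt" "m \<noteq> tp"
  shows "\<not> admits_G_neg V le bt tp"
proof
  assume "admits_G_neg V le bt tp"
  then obtain f where closed: "\<forall>x\<in>V. f x \<in> V" and rules: "\<forall>G D A.
      (ucons V le bt tp f (insert (UOp A) G) D \<longleftrightarrow> ucons V le bt tp f G (insert A D)) \<and>
      (ucons V le bt tp f G (insert (UOp A) D) \<longleftrightarrow> ucons V le bt tp f (insert A G) D)"
    unfolding admits_G_neg_def by blast
  let ?A = "UAt 0"
  have "ucons V le bt tp f {?A} {?A}" using closed by (auto intro: ucons_refl)
  then have neg_left: "ucons V le bt tp f {UOp ?A, ?A} {}"
    and neg_right: "ucons V le bt tp f {} {UOp ?A, ?A}"
    using rules by blast+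
  have v: "\<forall>n. (\<lambda>_. m) n \<in> V" using \<open>m \<in> V\<close> by simp
  have "tr le bt tp {f m, m} {}" using uconsD[OF neg_left v] by simp
  then have "f m = bt" using assms unfolding tr_def by auto
  moreover have "tr le bt tp {} {f m, m}" using uconsD[OF neg_right v] by simp
  then have "f m = tp" using assms unfolding tr_def by auto
  ultimately show False using bt_ne_tp assms by simp
qed

lemma not_admits_G_cond:
  assumes "m \<in> V" "m \<noteq> bt" "m \<noteq> tp"
  shows "\<not> admits_G_cond V le bt tp"
proof
  assume "admits_G_cond V le bt tp"
  then obtain f where closed: "\<forall>x\<in>V. \<forall>y\<in>V. f x y \<in> V" and rules: "\<forall>G D A B.
      (bcons V le bt tp f G (insert (BOp A B) D) \<longleftrightarrow> bcons V le bt tp f (insert A G) (insert B D)) \<and>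
      (bcons V le bt tp f (insert (BOp A B) G) D \<longleftrightarrow>
         bcons V le bt tp f G (insert A D) \<and> bcons V le bt tp f (insert B G) D)"
    unfolding admits_G_cond_def by blast
  let ?A = "BAt 0" and ?B = "BAt 1"
  have "bcons V le bt tp f {?A} {?B, ?A}" "bcons V le bt tp f {?A} {?A, ?B}"
    "bcons V le bt tp f {?B, ?A} {?B}"
    using closed by (auto intro: bcons_refl)
  then have cond_right: "bcons V le bt tp f {} {BOp ?A ?B, ?A}"
    and cond_left: "bcons V le bt tp f {BOp ?A ?B, ?A} {?B}"
    using rules by blast+
  define v where "v n = (if n = 0 then m else bt)" for n :: nat
  have v: "\<forall>n. v n \<in> V" using \<open>m \<in> V\<close> bt_in_V by (simp add: v_def)
  have "tr le bt tp {} {f m bt, m}" using bconsD[OF cond_right v] by (simp add: v_def)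
  then have "f m bt = tp" using assms unfolding tr_def by auto
  moreover have "tr le bt tp {f m bt, m} {bt}" using bconsD[OF cond_left v] by (simp add: v_def)
  ultimately have "tr le bt tp {tp, m} {bt}" by simp
  moreover have "bt \<noteq> tp" using bt_ne_tp assms by blast
  ultimately show False using assms tp_in_V le_bt_imp_eq unfolding tr_def by blast
qed

end

theorem theorem6p7:
  fixes V :: "'v set" and le :: "'v \<Rightarrow> 'v \<Rightarrow> bool" and bt tp :: 'v
  assumes "finite V" and "card V \<ge> 3"
    and "partial_order_on_carrier V le"
    and "bt \<in> V" and "tp \<in> V"
    and "\<forall>x\<in>V. le bt x \<and> le x tp"
    and "atomic_expressive V"
  shows "\<not> admits_G_neg V le bt tp \<and> \<not> admits_G_cond V le bt tp \<and>
         ((admits_G_conj V le bt tp \<and> admits_G_disj V le bt tp) \<longleftrightarrow> total_order_rel V le bt tp)"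
proof -
  interpret bounded_poset V le bt tp
    using assms(3-6) by unfold_locales
  obtain m where "m \<in> V" "m \<noteq> bt" "m \<noteq> tp"
    using card_ge_3_ex_other[OF assms(2)] by blast
  then show ?thesis
    using not_admits_G_neg not_admits_G_cond total_order_rel_if_admits_G_conj
      admits_G_conj_if_total admits_G_disj_if_total by blast
qed

end
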